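(* Let $n\geq3$ and let $C_n$ be the cycle graph with vertices $x_1,\ldots,x_n$ and edges $\{x_i,x_{i+1}\}$ ($1\le i\le n-1$) and $\{x_n,x_1\}$, so that $NI(C_n)=(x_ix_{i+1}x_{i+2} : i=1,\ldots,n)\subset R=K[x_1,\ldots,x_n]$ with indices read modulo $n$. Then $NI(C_n)$ is normal, has the strong persistence property, and has the persistence property.
   Context: For a simple graph $G$, $N_G[i]=\{j:\{i,j\}\in E(G)\}\cup\{i\}$ and $NI(G)=(\prod_{j\in N_G[i]}x_j : i\in V(G))$. An ideal $I$ is normal if $\overline{I^k}=I^k$ for all $k\geq1$ (integral closure). It has the strong persistence property if $(I^{k+1}:I)=I^k$ for all $k\ge1$, and the persistence property if $\mathrm{Ass}(R/I^k)\subseteq\mathrm{Ass}(R/I^{k+1})$ for all $k\ge1$. *)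

theory Defs
  imports "HOL-Library.Poly_Mapping"
begin

text \<open>Polynomial ring K[x_v : v in 'v] rendered as finitely supported maps from
  exponent vectors to coefficients (monomials = exponent vectors, polynomials = finitely supported coefficient maps).\<close>

definition ideal_gen :: "'a::comm_ring_1 set \<Rightarrow> 'a set" where
  "ideal_gen S = {(\<Sum>s\<in>F. c s * s) | F c. finite F \<and> F \<subseteq> S}"

definition is_ideal :: "'a::comm_ring_1 set \<Rightarrow> bool" where
  "is_ideal I \<longleftrightarrow> 0 \<in> I \<and> (\<forall>a\<in>I. \<forall>b\<in>I. a + b \<in> I) \<and> (\<forall>r. \<forall>a\<in>I. r * a \<in> I)"

definition ideal_prod :: "'a::comm_ring_1 set \<Rightarrow> 'a set \<Rightarrow> 'a set" where
  "ideal_prod I J = ideal_gen {a * b | a b. a \<in> I \<and> b \<in> J}"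

primrec ideal_pow :: "'a::comm_ring_1 set \<Rightarrow> nat \<Rightarrow> 'a set" where
  "ideal_pow I 0 = UNIV"
| "ideal_pow I (Suc k) = ideal_prod (ideal_pow I k) I"

definition colon :: "'a::comm_ring_1 set \<Rightarrow> 'a set \<Rightarrow> 'a set" where
  "colon J I = {f. \<forall>g\<in>I. f * g \<in> J}"

definition int_closure :: "'a::comm_ring_1 set \<Rightarrow> 'a set" where
  "int_closure I = {r. \<exists>m\<ge>1. \<exists>a::nat \<Rightarrow> 'a. (\<forall>i\<in>{1..m}. a i \<in> ideal_pow I i) \<and>
       r ^ m + (\<Sum>i=1..m. a i * r ^ (m - i)) = 0}"

definition normal_ideal :: "'a::comm_ring_1 set \<Rightarrow> bool" where
  "normal_ideal I \<longleftrightarrow> (\<forall>k\<ge>1. int_closure (ideal_pow I k) = ideal_pow I k)"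

definition strong_persistence :: "'a::comm_ring_1 set \<Rightarrow> bool" where
  "strong_persistence I \<longleftrightarrow> (\<forall>k\<ge>1. colon (ideal_pow I (k + 1)) I = ideal_pow I k)"

definition prime_ideal :: "'a::comm_ring_1 set \<Rightarrow> bool" where
  "prime_ideal P \<longleftrightarrow> is_ideal P \<and> P \<noteq> UNIV \<and> (\<forall>a b. a * b \<in> P \<longrightarrow> a \<in> P \<or> b \<in> P)"

text \<open>Associated primes of R/I: primes that are annihilators of elements f + I,
  i.e. of the form (I : f).\<close>
definition Ass :: "'a::comm_ring_1 set \<Rightarrow> 'a set set" where
  "Ass I = {P. prime_ideal P \<and> (\<exists>f. P = colon I {f})}"

definition persistence :: "'a::comm_ring_1 set \<Rightarrow> bool" where
  "persistence I \<longleftrightarrow> (\<forall>k\<ge>1. Ass (ideal_pow I k) \<subseteq> Ass (ideal_pow I (k + 1)))"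

definition Var :: "'v \<Rightarrow> ('v \<Rightarrow>\<^sub>0 nat) \<Rightarrow>\<^sub>0 'k::comm_ring_1" where
  "Var j = Poly_Mapping.single (Poly_Mapping.single j 1) 1"

text \<open>Graphs: symmetric irreflexive edge relation E on a finite vertex type.\<close>
definition closed_nbhd :: "('v \<Rightarrow> 'v \<Rightarrow> bool) \<Rightarrow> 'v \<Rightarrow> 'v set" where
  "closed_nbhd E i = {j. E i j} \<union> {i}"

definition NI :: "('v::finite \<Rightarrow> 'v \<Rightarrow> bool) \<Rightarrow> (('v \<Rightarrow>\<^sub>0 nat) \<Rightarrow>\<^sub>0 'k::comm_ring_1) set" where
  "NI E = ideal_gen ((\<lambda>i. \<Prod>j\<in>closed_nbhd E i. Var j) ` UNIV)"

text \<open>Cycle graph C_n on vertices x_0, ..., x_(n-1) given by the labelling v.\<close>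
definition cycle_edge :: "nat \<Rightarrow> (nat \<Rightarrow> 'v) \<Rightarrow> 'v \<Rightarrow> 'v \<Rightarrow> bool" where
  "cycle_edge n v a b \<longleftrightarrow> (\<exists>i<n. (a = v i \<and> b = v ((i + 1) mod n)) \<or> (b = v i \<and> a = v ((i + 1) mod n)))"

end

theory Submission
  imports Defs "HOL-Analysis.Analysis"
begin

text \<open>NI(C_n) is the monomial ideal generated by the monomials x^(g y), where g y is the
  indicator vector of the closed neighbourhood of the vertex y, and its k-th power is spanned
  by the monomials divisible by a product of k generators. Everything rests on an integer
  decomposition property: a monomial b with w(b) \<ge> k min_y w(g y) for all nonnegative
  weights w is divisible by such a product. By Farkas' lemma b dominates a fractional
  combination of generators of total mass k; as the neighbourhoods of the cycle are cyclic
  intervals of length three, rounding the partial sums of the coefficients along the cycle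
  makes the combination integral.

  Normality follows with the valuations given by the weights: for r integral over I^k, the
  lowest term of r^m cannot cancel in the integral equation, so every monomial of r satisfies
  the weight inequalities. Strong persistence follows by testing the weight inequality for
  b + g y with g y of least weight. Strong persistence implies persistence for any finitely
  generated ideal.\<close>

abbreviation lookup :: "('a \<Rightarrow>\<^sub>0 'b::zero) \<Rightarrow> 'a \<Rightarrow> 'b" where "lookup \<equiv> Poly_Mapping.lookup"
abbreviation keys :: "('a \<Rightarrow>\<^sub>0 'b::zero) \<Rightarrow> 'a set" where "keys \<equiv> Poly_Mapping.keys"

lemma ideal_gen_memI:
  assumes "finite F" "F \<subseteq> S" "x = (\<Sum>s\<in>F. c s * s)"
  shows "x \<in> ideal_gen S"
  using assms unfolding ideal_gen_def by blast

lemma ideal_gen_base: "s \<in> S \<Longrightarrow> s \<in> ideal_gen S"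
  by (rule ideal_gen_memI[of "{s}" _ _ "\<lambda>_. 1"]) auto

lemma is_ideal_ideal_gen: "is_ideal (ideal_gen S)"
  unfolding is_ideal_def
proof (intro conjI ballI allI)
  show "0 \<in> ideal_gen S" by (rule ideal_gen_memI[of "{}" _ _ "\<lambda>_. 0"]) auto
next
  fix x y assume "x \<in> ideal_gen S" "y \<in> ideal_gen S"
  then obtain F c G d where F: "finite F" "F \<subseteq> S" "x = (\<Sum>s\<in>F. c s * s)"
    and G: "finite G" "G \<subseteq> S" "y = (\<Sum>s\<in>G. d s * s)"
    unfolding ideal_gen_def by blast
  define c' where "c' s = (if s \<in> F then c s else 0)" for s
  define d' where "d' s = (if s \<in> G then d s else 0)" for s
  have "x = (\<Sum>s\<in>F \<union> G. c' s * s)"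
    unfolding F(3) c'_def by (rule sum.mono_neutral_cong_left) (use F G in auto)
  moreover have "y = (\<Sum>s\<in>F \<union> G. d' s * s)"
    unfolding G(3) d'_def by (rule sum.mono_neutral_cong_left) (use F G in auto)
  ultimately have "x + y = (\<Sum>s\<in>F \<union> G. (c' s + d' s) * s)"
    by (simp add: sum.distrib distrib_right)
  then show "x + y \<in> ideal_gen S" using F G by (intro ideal_gen_memI) auto
next
  fix r x assume "x \<in> ideal_gen S"
  then obtain F c where F: "finite F" "F \<subseteq> S" "x = (\<Sum>s\<in>F. c s * s)"
    unfolding ideal_gen_def by blast
  have "r * x = (\<Sum>s\<in>F. (r * c s) * s)"
    unfolding F(3) by (simp add: sum_distrib_left mult.assoc)
  then show "r * x \<in> ideal_gen S" using F by (intro ideal_gen_memI) auto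
qed

lemma is_ideal_sum:
  assumes "is_ideal J" "finite A" "\<And>i. i \<in> A \<Longrightarrow> f i \<in> J"
  shows "sum f A \<in> J"
  using assms(2,3) by (induction A rule: finite_induct) (use assms(1) in \<open>auto simp: is_ideal_def\<close>)

lemma ideal_gen_least:
  assumes "is_ideal P" "S \<subseteq> P"
  shows "ideal_gen S \<subseteq> P"
proof
  fix x assume "x \<in> ideal_gen S"
  then obtain F c where "finite F" "F \<subseteq> S" "x = (\<Sum>s\<in>F. c s * s)"
    unfolding ideal_gen_def by blast
  then show "x \<in> P"
    using assms by (auto intro!: is_ideal_sum simp: is_ideal_def)
qed

lemma is_ideal_ideal_pow: "is_ideal (ideal_pow I k)"
  by (cases k) (simp_all add: is_ideal_def[of UNIV] ideal_prod_def is_ideal_ideal_gen)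

lemma ideal_pow_Suc_memI: "a \<in> ideal_pow I k \<Longrightarrow> b \<in> I \<Longrightarrow> a * b \<in> ideal_pow I (Suc k)"
  unfolding ideal_pow.simps ideal_prod_def by (rule ideal_gen_base) blast

lemma ideal_pow_one: "is_ideal J \<Longrightarrow> ideal_pow J 1 = J"
proof
  assume J: "is_ideal J"
  have "ideal_pow J 1 = ideal_gen {a * b |a b. a \<in> UNIV \<and> b \<in> J}"
    by (simp add: ideal_prod_def)
  also have "\<dots> \<subseteq> J"
    using J by (intro ideal_gen_least) (auto simp: is_ideal_def)
  finally show "ideal_pow J 1 \<subseteq> J" .
  show "J \<subseteq> ideal_pow J 1"
    using ideal_pow_Suc_memI[of 1 J 0] by auto
qed

lemma is_ideal_colon_single: "is_ideal J \<Longrightarrow> is_ideal (colon J {f})"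
  unfolding is_ideal_def colon_def by (auto simp: distrib_right mult.assoc)

lemma ideal_subset_int_closure:
  assumes "is_ideal J"
  shows "J \<subseteq> int_closure J"
proof
  fix r assume "r \<in> J"
  then have "- r \<in> ideal_pow J 1"
    using assms ideal_pow_one[OF assms] unfolding is_ideal_def by (metis mult_minus1)
  moreover have "r ^ 1 + (\<Sum>i=1..1. (\<lambda>_. - r) i * r ^ (1 - i)) = 0" by simp
  ultimately show "r \<in> int_closure J" unfolding int_closure_def
    by (intro CollectI exI[of _ 1] exI[of _ "\<lambda>_. - r"]) auto
qed

lemma prime_ideal_prod_notin:
  assumes P: "prime_ideal P" and "finite A" and "\<And>y. y \<in> A \<Longrightarrow> x y \<notin> P"
  shows "prod x A \<notin> P"
  using assms(2,3)
proof (induction A rule: finite_induct)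
  case empty
  have "1 \<notin> P"
    using P unfolding prime_ideal_def is_ideal_def by (metis UNIV_eq_I mult_1_right)
  then show ?case by simp
next
  case (insert a A)
  then show ?case using P unfolding prime_ideal_def by auto
qed

lemma colon_ideal_pow_subset_Suc:
  "b \<in> I \<Longrightarrow> colon (ideal_pow I k) {f} \<subseteq> colon (ideal_pow I (Suc k)) {f * b}"
  unfolding colon_def using ideal_pow_Suc_memI by (fastforce simp: mult.assoc)

lemma prod_mult_in_colon_ideal_gen:
  fixes h :: "'i::finite \<Rightarrow> 'a::comm_ring_1"
  assumes J: "is_ideal J" and hh: "\<And>y. hh y * (f * h y) \<in> J"
  shows "(\<Prod>y\<in>UNIV. hh y) * f \<in> colon J (ideal_gen (range h))"
proof -
  have "h y * ((\<Prod>y\<in>UNIV. hh y) * f) \<in> J" for y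
  proof -
    have "h y * ((\<Prod>y\<in>UNIV. hh y) * f) = (\<Prod>z\<in>UNIV - {y}. hh z) * (hh y * (f * h y))"
      by (simp add: prod.remove ac_simps)
    then show ?thesis using J hh[of y] unfolding is_ideal_def by simp
  qed
  then have "ideal_gen (range h) \<subseteq> colon J {(\<Prod>y\<in>UNIV. hh y) * f}"
    by (intro ideal_gen_least is_ideal_colon_single[OF J]) (auto simp: colon_def)
  then show ?thesis unfolding colon_def by (auto simp: mult.commute)
qed

text \<open>An associated prime P = (I^k : f) of I^k is (I^(k+1) : f h y) for some generator h y:
  otherwise there are hh y \<notin> P with hh y f h y \<in> I^(k+1), and strong persistence puts
  (\<Prod>y. hh y) f into I^k, contradicting primality.\<close>

lemma strong_persistence_imp_persistence:
  fixes h :: "'i::finite \<Rightarrow> 'a::comm_ring_1"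
  assumes strong: "strong_persistence (ideal_gen (range h))"
  shows "persistence (ideal_gen (range h))"
  unfolding persistence_def
proof (intro allI impI subsetI)
  fix k :: nat and P assume k1: "k \<ge> 1"
  let ?I = "ideal_gen (range h)"
  assume "P \<in> Ass (ideal_pow ?I k)"
  then obtain f where P: "prime_ideal P" and Pf: "P = colon (ideal_pow ?I k) {f}"
    unfolding Ass_def by blast
  have "\<exists>y. P = colon (ideal_pow ?I (Suc k)) {f * h y}"
  proof (rule ccontr)
    assume "\<nexists>y. P = colon (ideal_pow ?I (Suc k)) {f * h y}"
    moreover have "P \<subseteq> colon (ideal_pow ?I (Suc k)) {f * h y}" for y
      unfolding Pf by (rule colon_ideal_pow_subset_Suc) (simp add: ideal_gen_base)
    ultimately have "\<forall>y. \<exists>g. g * (f * h y) \<in> ideal_pow ?I (Suc k) \<and> g \<notin> P"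
      unfolding colon_def by blast
    then obtain hh where hh: "\<And>y. hh y * (f * h y) \<in> ideal_pow ?I (Suc k)" "\<And>y. hh y \<notin> P"
      by metis
    have "(\<Prod>y\<in>UNIV. hh y) * f \<in> colon (ideal_pow ?I (k + 1)) ?I"
      using prod_mult_in_colon_ideal_gen[OF is_ideal_ideal_pow hh(1)] by simp
    then have "(\<Prod>y\<in>UNIV. hh y) \<in> P"
      using strong k1 Pf unfolding strong_persistence_def colon_def by auto
    moreover have "(\<Prod>y\<in>UNIV. hh y) \<notin> P" by (rule prime_ideal_prod_notin[OF P]) (use hh in auto)
    ultimately show False by simp
  qed
  then show "P \<in> Ass (ideal_pow ?I (k + 1))" using P unfolding Ass_def by auto
qed

section \<open>Monomial ideals\<close>

definition packable :: "('i::finite \<Rightarrow> ('v \<Rightarrow>\<^sub>0 nat)) \<Rightarrow> nat \<Rightarrow> ('v \<Rightarrow>\<^sub>0 nat) \<Rightarrow> bool" where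
  "packable g k a \<longleftrightarrow> (\<exists>d::'i \<Rightarrow> nat. sum d UNIV = k \<and>
      (\<forall>x. (\<Sum>y\<in>UNIV. d y * lookup (g y) x) \<le> lookup a x))"

definition packable_polys :: "('i::finite \<Rightarrow> ('v \<Rightarrow>\<^sub>0 nat)) \<Rightarrow> nat \<Rightarrow> (('v \<Rightarrow>\<^sub>0 nat) \<Rightarrow>\<^sub>0 'k::comm_ring_1) set" where
  "packable_polys g k = {f. \<forall>a\<in>keys f. packable g k a}"

definition monomial_ideal :: "('i::finite \<Rightarrow> ('v \<Rightarrow>\<^sub>0 nat)) \<Rightarrow> (('v \<Rightarrow>\<^sub>0 nat) \<Rightarrow>\<^sub>0 'k::comm_ring_1) set" where
  "monomial_ideal g = ideal_gen (range (\<lambda>y. Poly_Mapping.single (g y) 1))"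

lemma packable_0: "packable g 0 a"
  unfolding packable_def by (rule exI[of _ "\<lambda>_. 0"]) simp

lemma packable_add:
  assumes "packable g k a" "packable g l b"
  shows "packable g (k + l) (a + b)"
proof -
  obtain d where d: "sum d UNIV = k" "\<And>x. (\<Sum>y\<in>UNIV. d y * lookup (g y) x) \<le> lookup a x"
    using assms(1) unfolding packable_def by blast
  obtain e where e: "sum e UNIV = l" "\<And>x. (\<Sum>y\<in>UNIV. e y * lookup (g y) x) \<le> lookup b x"
    using assms(2) unfolding packable_def by blast
  have "(\<Sum>y\<in>UNIV. (d y + e y) * lookup (g y) x) \<le> lookup (a + b) x" for x
    using d(2)[of x] e(2)[of x] by (simp add: lookup_add distrib_right sum.distrib)
  then show ?thesis
    using d e unfolding packable_def by (intro exI[of _ "\<lambda>y. d y + e y"]) (simp add: sum.distrib)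
qed

lemma packable_add_left: "packable g k b \<Longrightarrow> packable g k (a + b)"
  using packable_add[OF packable_0] by fastforce

lemma packable_gen: "packable g 1 (g y)"
  unfolding packable_def
  by (rule exI[of _ "\<lambda>z. of_bool (z = y)"]) simp

lemma packable_SucE:
  assumes "packable g (Suc k) a"
  obtains y a' where "packable g k a'" "a = a' + g y"
proof -
  obtain d where d: "sum d UNIV = Suc k" "\<And>x. (\<Sum>z\<in>UNIV. d z * lookup (g z) x) \<le> lookup a x"
    using assms unfolding packable_def by blast
  obtain y where y: "d y > 0"
    using d(1) by (metis Suc_neq_Zero neq0_conv sum.neutral)
  define d' where "d' = d(y := d y - 1)"
  have d_eq: "d z = d' z + of_bool (z = y)" for z
    using y by (simp add: d'_def)
  have "sum d' UNIV = k"
    using d(1) by (simp add: d_eq sum.distrib)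
  moreover have d_sum: "(\<Sum>z\<in>UNIV. d z * lookup (g z) x) = (\<Sum>z\<in>UNIV. d' z * lookup (g z) x) + lookup (g y) x" for x
    by (simp add: d_eq distrib_right sum.distrib)
  define a' where "a' = a - g y"
  have "lookup (g y) x \<le> lookup a x" for x using d(2)[of x] d_sum[of x] by simp
  then have "a = a' + g y"
    by (intro poly_mapping_eqI) (simp add: a'_def lookup_add lookup_minus)
  moreover have "(\<Sum>z\<in>UNIV. d' z * lookup (g z) x) \<le> lookup a' x" for x
    using d(2)[of x] d_sum[of x] by (simp add: a'_def lookup_minus)
  ultimately show ?thesis using that unfolding packable_def by blast
qed

lemma is_ideal_packable_polys: "is_ideal (packable_polys g k)"
  unfolding is_ideal_def packable_polys_def
  using keys_add keys_mult packable_add_left by fastforce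

lemma mult_in_packable_polys:
  assumes "a \<in> packable_polys g k" "b \<in> packable_polys g l"
  shows "a * b \<in> packable_polys g (k + l)"
  using assms keys_mult[of a b] packable_add unfolding packable_polys_def by fastforce

lemma ideal_pow_subset_packable_polys:
  assumes "J \<subseteq> packable_polys g k"
  shows "ideal_pow J i \<subseteq> packable_polys g (k * i)"
proof (induction i)
  case 0 then show ?case by (auto simp: packable_polys_def packable_0)
next
  case (Suc i)
  have "ideal_prod (ideal_pow J i) J \<subseteq> packable_polys g (k * i + k)"
    unfolding ideal_prod_def using Suc assms
    by (intro ideal_gen_least is_ideal_packable_polys) (blast intro: mult_in_packable_polys)
  then show ?case by (simp add: add.commute)
qed

lemma monomial_ideal_subset_packable_polys: "monomial_ideal g \<subseteq> packable_polys g 1"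
  unfolding monomial_ideal_def
  using packable_gen[of g]
  by (intro ideal_gen_least is_ideal_packable_polys) (auto simp: packable_polys_def)

lemma single_in_monomial_ideal_pow:
  "packable g k a \<Longrightarrow> Poly_Mapping.single a c \<in> ideal_pow (monomial_ideal g) k"
proof (induction k arbitrary: a c)
  case 0 then show ?case by simp
next
  case (Suc k)
  then obtain y a' where a': "packable g k a'" "a = a' + g y" by (blast elim: packable_SucE)
  have "Poly_Mapping.single (g y) 1 \<in> monomial_ideal g"
    unfolding monomial_ideal_def by (rule ideal_gen_base) simp
  with Suc.IH[OF a'(1)] show ?case
    using ideal_pow_Suc_memI by (fastforce simp: a'(2) mult_single)
qed

lemma poly_mapping_sum_single: "f = (\<Sum>a\<in>keys f. Poly_Mapping.single a (lookup f a))"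
proof (rule poly_mapping_eqI)
  fix x
  have "lookup (\<Sum>a\<in>keys f. Poly_Mapping.single a (lookup f a)) x
      = (\<Sum>a\<in>keys f. if a = x then lookup f a else 0)"
    by (simp add: lookup_sum lookup_single when_def)
  then show "lookup f x = lookup (\<Sum>a\<in>keys f. Poly_Mapping.single a (lookup f a)) x"
    by (cases "x \<in> keys f") (auto simp: in_keys_iff)
qed

lemma monomial_ideal_pow: "ideal_pow (monomial_ideal g) k = packable_polys g k"
proof
  show "ideal_pow (monomial_ideal g) k \<subseteq> packable_polys g k"
    using ideal_pow_subset_packable_polys[OF monomial_ideal_subset_packable_polys] by fastforce
  show "packable_polys g k \<subseteq> ideal_pow (monomial_ideal g) k"
  proof
    fix f assume "f \<in> packable_polys g k"
    then have "(\<Sum>a\<in>keys f. Poly_Mapping.single a (lookup f a)) \<in> ideal_pow (monomial_ideal g) k"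
      unfolding packable_polys_def
      by (intro is_ideal_sum[OF is_ideal_ideal_pow]) (auto intro: single_in_monomial_ideal_pow)
    then show "f \<in> ideal_pow (monomial_ideal g) k" using poly_mapping_sum_single[of f] by simp
  qed
qed

section \<open>Weights\<close>

definition weight :: "('v::finite \<Rightarrow> real) \<Rightarrow> ('v \<Rightarrow>\<^sub>0 nat) \<Rightarrow> real" where
  "weight w a = (\<Sum>z\<in>UNIV. w z * real (lookup a z))"

lemma weight_add: "weight w (a + b) = weight w a + weight w b"
  by (simp add: weight_def lookup_add distrib_left sum.distrib)

lemma weight_zero [simp]: "weight w 0 = 0"
  by (simp add: weight_def)

lemma weight_sum_const: "weight w (\<Sum>_<p. a) = real p * weight w a"
  by (induction p) (simp_all add: weight_add algebra_simps)

lemma packable_weight_ge: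
  assumes "packable g k a" "\<And>z. w z \<ge> 0" "\<And>y. \<nu> \<le> weight w (g y)"
  shows "real k * \<nu> \<le> weight w a"
proof -
  obtain d where d: "sum d UNIV = k" "\<And>x. (\<Sum>y\<in>UNIV. d y * lookup (g y) x) \<le> lookup a x"
    using assms(1) unfolding packable_def by blast
  have "real k * \<nu> = (\<Sum>y\<in>UNIV. real (d y) * \<nu>)"
    using d(1) by (simp add: sum_distrib_right[symmetric] of_nat_sum[symmetric])
  also have "\<dots> \<le> (\<Sum>y\<in>UNIV. real (d y) * weight w (g y))"
    by (rule sum_mono) (simp add: assms(3) mult_left_mono)
  also have "\<dots> = (\<Sum>y\<in>UNIV. \<Sum>x\<in>UNIV. w x * (real (d y) * real (lookup (g y) x)))"
    unfolding weight_def by (simp add: sum_distrib_left algebra_simps)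
  also have "\<dots> = (\<Sum>x\<in>UNIV. w x * real (\<Sum>y\<in>UNIV. d y * lookup (g y) x))"
    by (subst sum.swap) (simp add: sum_distrib_left)
  also have "\<dots> \<le> weight w a"
    unfolding weight_def
  proof (intro sum_mono mult_left_mono)
    fix x
    show "real (\<Sum>y\<in>UNIV. d y * lookup (g y) x) \<le> real (lookup a x)"
      using d(2) by (simp only: of_nat_le_iff)
  qed (use assms(2) in simp)
  finally show ?thesis .
qed

text \<open>Monomials are compared by weight, ties being broken by a fixed monomial order,
  transported to exponents indexed by nat through the injection to_nat.\<close>

definition nat_exps :: "('v::countable \<Rightarrow>\<^sub>0 nat) \<Rightarrow> (nat \<Rightarrow>\<^sub>0 nat)" where
  "nat_exps a = (\<Sum>z\<in>keys a. Poly_Mapping.single (to_nat z) (lookup a z))"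

lemma lookup_nat_exps: "lookup (nat_exps a) (to_nat z) = lookup a z"
proof -
  have "lookup (nat_exps a) (to_nat z) = (\<Sum>y\<in>keys a. if y = z then lookup a y else 0)"
    unfolding nat_exps_def lookup_sum by (intro sum.cong) (auto simp: lookup_single when_def)
  then show ?thesis by (cases "z \<in> keys a") (auto simp: in_keys_iff)
qed

lemma nat_exps_inj: "nat_exps a = nat_exps b \<Longrightarrow> a = b"
  by (rule poly_mapping_eqI) (metis lookup_nat_exps)

lemma nat_exps_add:
  fixes a b :: "'v::countable \<Rightarrow>\<^sub>0 nat"
  shows "nat_exps (a + b) = nat_exps a + nat_exps b"
proof (rule poly_mapping_eqI)
  fix i
  show "lookup (nat_exps (a + b)) i = lookup (nat_exps a + nat_exps b) i"
  proof (cases "i \<in> range (to_nat :: 'v \<Rightarrow> nat)")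
    case True
    then show ?thesis by (auto simp: lookup_nat_exps lookup_add)
  next
    case False
    then have "lookup (nat_exps u) i = 0" for u :: "'v \<Rightarrow>\<^sub>0 nat"
      unfolding nat_exps_def lookup_sum by (intro sum.neutral) (auto simp: lookup_single when_def)
    then show ?thesis by (simp add: lookup_add)
  qed
qed

definition weight_le :: "('v::finite \<Rightarrow> real) \<Rightarrow> ('v \<Rightarrow>\<^sub>0 nat) \<Rightarrow> ('v \<Rightarrow>\<^sub>0 nat) \<Rightarrow> bool" where
  "weight_le w a b \<longleftrightarrow> weight w a < weight w b \<or> (weight w a = weight w b \<and> nat_exps a \<le> nat_exps b)"

lemma weight_le_refl: "weight_le w a a"
  by (simp add: weight_le_def)

lemma weight_le_weight: "weight_le w a b \<Longrightarrow> weight w a \<le> weight w b"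
  by (auto simp: weight_le_def)

lemma weight_le_add:
  "weight_le w a b \<Longrightarrow> weight_le w c d \<Longrightarrow> weight_le w (a + c) (b + d)"
  unfolding weight_le_def weight_add nat_exps_add by (auto intro: add_mono)

lemma weight_le_add_eq:
  assumes "weight_le w a b" "weight_le w c d" "b + d = a + c"
  shows "b = a \<and> d = c"
proof -
  have "weight w a = weight w b \<and> weight w c = weight w d"
    using assms weight_add[of w a c] weight_add[of w b d] by (auto simp: weight_le_def)
  then have "nat_exps a \<le> nat_exps b" "nat_exps c \<le> nat_exps d"
    using assms(1,2) by (auto simp: weight_le_def)
  moreover have "nat_exps b + nat_exps d = nat_exps a + nat_exps c"
    using assms(3) by (metis nat_exps_add)
  ultimately have "nat_exps b = nat_exps a"
    using add_less_le_mono[of "nat_exps a" "nat_exps b" "nat_exps c" "nat_exps d"]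
    by (metis order.order_iff_strict order.irrefl)
  with \<open>nat_exps b + nat_exps d = nat_exps a + nat_exps c\<close> have "nat_exps d = nat_exps c"
    by simp
  with \<open>nat_exps b = nat_exps a\<close> show ?thesis by (auto intro: nat_exps_inj)
qed

lemma weight_le_lowest_exists:
  assumes "finite S" "S \<noteq> {}"
  obtains a0 where "a0 \<in> S" "\<And>z. z \<in> S \<Longrightarrow> weight_le w a0 z"
proof -
  define T where "T = {z\<in>S. weight w z = Min (weight w ` S)}"
  have "Min (weight w ` S) \<in> weight w ` S" using assms by (intro Min_in) auto
  then have "finite T" "T \<noteq> {}" using assms(1) by (auto simp: T_def)
  then have "Min (nat_exps ` T) \<in> nat_exps ` T" by (intro Min_in) auto
  then obtain a0 where a0: "a0 \<in> T" "nat_exps a0 = Min (nat_exps ` T)" by auto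
  have "weight_le w a0 z" if z: "z \<in> S" for z
  proof -
    have "weight w a0 \<le> weight w z" using a0(1) z assms(1) by (simp add: T_def)
    moreover have "nat_exps a0 \<le> nat_exps z" if "weight w z = weight w a0"
      using a0 z that \<open>finite T\<close> by (simp add: T_def)
    ultimately show ?thesis unfolding weight_le_def by fastforce
  qed
  with a0 show ?thesis using that by (auto simp: T_def)
qed

lemma lookup_mult_keys:
  "lookup (f * g) x = (\<Sum>(y,z)\<in>keys f \<times> keys g. if x = y + z then lookup f y * lookup g z else 0)"
proof -
  have inner: "(\<Sum>q. lookup g q when x = l + q) = (\<Sum>q\<in>keys g. lookup g q when x = l + q)" for l
    by (rule Sum_any.expand_superset) (auto simp: in_keys_iff)
  have "lookup (f * g) x = (\<Sum>l. lookup f l * (\<Sum>q\<in>keys g. lookup g q when x = l + q))"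
    by (simp add: lookup_mult inner)
  also have "\<dots> = (\<Sum>l\<in>keys f. lookup f l * (\<Sum>q\<in>keys g. lookup g q when x = l + q))"
    by (rule Sum_any.expand_superset) (auto simp: in_keys_iff)
  also have "\<dots> = (\<Sum>l\<in>keys f. \<Sum>q\<in>keys g. if x = l + q then lookup f l * lookup g q else 0)"
    by (auto simp: sum_distrib_left when_def intro!: sum.cong)
  finally show ?thesis by (simp add: sum.cartesian_product)
qed

lemma lookup_mult_unique_pair:
  assumes "\<And>y z. y \<in> keys f \<Longrightarrow> z \<in> keys g \<Longrightarrow> y + z = y0 + z0 \<Longrightarrow> y = y0 \<and> z = z0"
  shows "lookup (f * g) (y0 + z0) = lookup f y0 * lookup g z0"
proof -
  have "lookup (f * g) (y0 + z0) =
      (\<Sum>p\<in>keys f \<times> keys g. if p = (y0, z0) then lookup f y0 * lookup g z0 else 0)"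
    unfolding lookup_mult_keys by (rule sum.cong) (auto split: if_splits dest: assms[OF _ _ sym])
  then show ?thesis by (cases "y0 \<in> keys f \<and> z0 \<in> keys g") (auto simp: in_keys_iff)
qed

text \<open>By weight_le_add_eq the lowest monomial of r^p arises from a single product of
  monomials of r, so its coefficient cannot cancel.\<close>

lemma lowest_key_power:
  fixes r :: "('v::finite \<Rightarrow>\<^sub>0 nat) \<Rightarrow>\<^sub>0 'k::comm_ring_1"
  assumes a0: "a0 \<in> keys r" and lowest: "\<And>z. z \<in> keys r \<Longrightarrow> weight_le w a0 z"
  shows "(\<forall>x\<in>keys (r ^ p). weight_le w (\<Sum>_<p. a0) x) \<and> lookup (r ^ p) (\<Sum>_<p. a0) = lookup r a0 ^ p"
proof (induction p)
  case 0
  have "keys (1 :: ('v \<Rightarrow>\<^sub>0 nat) \<Rightarrow>\<^sub>0 'k) \<subseteq> {0}" by simp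
  then show ?case by (auto simp: weight_le_refl)
next
  case (Suc p)
  let ?pa = "\<Sum>_<p. a0"
  have rSuc: "r ^ Suc p = r ^ p * r" by (simp add: power_Suc2)
  have paSuc: "(\<Sum>_<Suc p. a0) = ?pa + a0" by simp
  have "weight_le w (\<Sum>_<Suc p. a0) x" if "x \<in> keys (r ^ Suc p)" for x
    using that keys_mult[of "r ^ p" r] Suc.IH lowest unfolding rSuc by (auto intro: weight_le_add)
  moreover have "lookup (r ^ p * r) (?pa + a0) = lookup (r ^ p) ?pa * lookup r a0"
    using Suc.IH lowest weight_le_add_eq[of w ?pa _ a0] by (intro lookup_mult_unique_pair) blast
  ultimately show ?case
    using Suc.IH unfolding paSuc rSuc power_Suc2[of "lookup r a0"] by simp
qed

text \<open>If a monomial of r had weight below L, the lowest monomial of r^m would be lighter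
  than all monomials of the other terms of the integral equation, so it could not cancel.\<close>

lemma int_closure_weight_ge:
  fixes r :: "('v::finite \<Rightarrow>\<^sub>0 nat) \<Rightarrow>\<^sub>0 'k::idom"
  assumes eq: "r ^ m + (\<Sum>i=1..m. a i * r ^ (m - i)) = 0"
    and ai: "\<And>i u. i \<in> {1..m} \<Longrightarrow> u \<in> keys (a i) \<Longrightarrow> real i * L \<le> weight w u"
    and b: "b \<in> keys r"
  shows "L \<le> weight w b"
proof (rule ccontr)
  assume "\<not> L \<le> weight w b"
  have "finite (keys r)" "keys r \<noteq> {}" using b by auto
  then obtain a0 where a0: "a0 \<in> keys r" and lowest: "\<And>z. z \<in> keys r \<Longrightarrow> weight_le w a0 z"
    by (rule weight_le_lowest_exists[where w = w]) auto
  define \<mu> where "\<mu> = weight w a0"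
  have muL: "\<mu> < L"
    using \<open>\<not> L \<le> weight w b\<close> weight_le_weight[OF lowest[OF b]] by (simp add: \<mu>_def)
  define M where "M = (\<Sum>_<m. a0)"
  have WM: "weight w M = real m * \<mu>" by (simp add: M_def \<mu>_def weight_sum_const)
  have low_pow: "real p * \<mu> \<le> weight w x" if "x \<in> keys (r ^ p)" for p x
    using lowest_key_power[OF a0 lowest, of p] that weight_le_weight
    by (fastforce simp: \<mu>_def weight_sum_const)
  have "lookup (a i * r ^ (m - i)) M = 0" if i: "i \<in> {1..m}" for i
  proof (rule ccontr)
    assume "lookup (a i * r ^ (m - i)) M \<noteq> 0"
    then have "M \<in> keys (a i * r ^ (m - i))" by (simp add: in_keys_iff)
    then obtain u y where u: "u \<in> keys (a i)" and y: "y \<in> keys (r ^ (m - i))" and My: "M = u + y"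
      using keys_mult by blast
    have "real m * \<mu> = real i * \<mu> + real (m - i) * \<mu>"
      using i by (simp add: of_nat_diff algebra_simps)
    also have "\<dots> < real i * L + real (m - i) * \<mu>" using i muL by simp
    also have "\<dots> \<le> weight w M" unfolding My weight_add using ai[OF i u] low_pow[OF y] by simp
    finally show False using WM by simp
  qed
  moreover have "lookup (r ^ m) M = lookup r a0 ^ m"
    using lowest_key_power[OF a0 lowest] by (simp add: M_def)
  ultimately have "lookup r a0 ^ m = 0"
    using arg_cong[OF eq, of "\<lambda>f. lookup f M"] by (simp add: lookup_add lookup_sum)
  then show False using a0 by (simp add: in_keys_iff)
qed

section \<open>From weight inequalities to fractional packings\<close>

lemma nonneg_if_bounded_below_on_orthant:
  fixes a q :: "real^'n"
  assumes "\<And>p. \<forall>x. 0 \<le> p $ x \<Longrightarrow> \<beta> < inner a (p + q)"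
  shows "0 \<le> a $ x"
proof (rule ccontr)
  assume "\<not> 0 \<le> a $ x"
  define t where "t = (\<bar>inner a q\<bar> + \<bar>\<beta>\<bar> + 1) / (- a $ x)"
  have "0 \<le> t" using \<open>\<not> 0 \<le> a $ x\<close> unfolding t_def by (intro divide_nonneg_pos) auto
  then have "\<beta> < inner a (t *\<^sub>R axis x 1 + q)"
    by (intro assms) (simp add: axis_def)
  moreover have "t * a $ x = - (\<bar>inner a q\<bar> + \<bar>\<beta>\<bar> + 1)"
    using \<open>\<not> 0 \<le> a $ x\<close> by (simp add: t_def)
  ultimately show False by (simp add: inner_add_right inner_axis)
qed

text \<open>A form of Farkas' lemma: a point outside the sum of the nonnegative orthant and a
  compact convex set C is separated from C by a nonnegative functional.\<close>

lemma orthant_sum_separation: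
  fixes C :: "(real^'n) set"
  assumes "compact C" "convex C"
    and "b \<notin> (\<Union>p\<in>{p. \<forall>x. 0 \<le> p $ x}. \<Union>q\<in>C. {p + q})"
  obtains a where "\<And>x. 0 \<le> a $ x" "\<And>q. q \<in> C \<Longrightarrow> inner a b < inner a q"
proof (cases "C = {}")
  case True
  then show ?thesis using that[of 0] by simp
next
  case False
  then obtain q0 where "q0 \<in> C" by blast
  let ?Orth = "{p :: real^'n. \<forall>x. 0 \<le> p $ x}"
  have "closed ?Orth" by (intro closed_Collect_all closed_Collect_le continuous_intros)
  then have closed: "closed (\<Union>p\<in>?Orth. \<Union>q\<in>C. {p + q})" using assms(1) by (rule closed_compact_sums)
  have "convex ?Orth" by (auto intro!: convexI)
  then have convex: "convex (\<Union>p\<in>?Orth. \<Union>q\<in>C. {p + q})" using assms(2) by (rule convex_sums)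
  obtain a \<beta> where ab: "inner a b < \<beta>"
    and K: "\<forall>x\<in>(\<Union>p\<in>?Orth. \<Union>q\<in>C. {p + q}). \<beta> < inner a x"
    using separating_hyperplane_closed_point[OF convex closed assms(3)] by blast
  have above: "\<beta> < inner a (p + q)" if "p \<in> ?Orth" "q \<in> C" for p q
    using K that by blast
  show ?thesis
  proof (rule that)
    show "0 \<le> a $ x" for x
      using above[OF _ \<open>q0 \<in> C\<close>] by (rule nonneg_if_bounded_below_on_orthant) simp
    show "inner a b < inner a q" if "q \<in> C" for q
      using ab above[of 0 q] that by simp
  qed
qed

lemma weight_eq_inner: "weight (\<lambda>z. a $ z) h = inner a (\<chi> x. real (lookup h x))"
  by (simp add: weight_def inner_vec_def)

lemma fractional_packing_exists:
  fixes g :: "'i::finite \<Rightarrow> ('v::finite \<Rightarrow>\<^sub>0 nat)"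
  assumes H: "\<And>w \<nu>. \<forall>z. 0 \<le> w z \<Longrightarrow> \<forall>y. \<nu> \<le> weight w (g y) \<Longrightarrow> real k * \<nu> \<le> weight w b"
  shows "\<exists>c::'i \<Rightarrow> real. (\<forall>y. 0 \<le> c y) \<and> sum c UNIV = real k \<and>
     (\<forall>x. (\<Sum>y\<in>UNIV. c y * real (lookup (g y) x)) \<le> real (lookup b x))"
proof -
  define Cs :: "(real^'i) set" where "Cs = {c. (\<forall>y. 0 \<le> c $ y) \<and> (\<Sum>y\<in>UNIV. c $ y) = real k}"
  define L :: "real^'i \<Rightarrow> real^'v" where "L c = (\<chi> x. \<Sum>y\<in>UNIV. c $ y * real (lookup (g y) x))" for c
  define bv :: "real^'v" where "bv = (\<chi> x. real (lookup b x))"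
  have "linear L"
    by (rule linearI) (simp_all add: L_def vec_eq_iff sum.distrib sum_distrib_left algebra_simps)
  have "closed Cs"
    unfolding Cs_def by (intro closed_Collect_conj closed_Collect_all closed_Collect_le closed_Collect_eq continuous_intros)
  moreover have "Cs \<subseteq> cbox 0 (\<chi> _. real k)"
  proof
    fix c assume c: "c \<in> Cs"
    have "c $ y \<le> real k" for y
      using c member_le_sum[of y UNIV "\<lambda>y. c $ y"] by (simp add: Cs_def)
    then show "c \<in> cbox 0 (\<chi> _. real k)" using c by (simp add: Cs_def mem_box_cart)
  qed
  then have "bounded Cs" by (rule bounded_subset[rotated]) simp
  ultimately have "compact Cs" by (simp add: compact_eq_bounded_closed)
  moreover have "continuous_on Cs L"
    using \<open>linear L\<close> by (intro linear_continuous_on) (simp add: linear_conv_bounded_linear)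
  ultimately have "compact (L ` Cs)" by (rule compact_continuous_image[rotated])
  moreover have "convex (L ` Cs)"
    using \<open>linear L\<close> unfolding Cs_def
    by (intro convex_linear_image convexI) (auto simp: sum.distrib sum_distrib_left[symmetric] simp flip: distrib_right)
  moreover define e :: "'i \<Rightarrow> real^'i" where "e y = (\<chi> z. of_bool (z = y) * real k)" for y
  have "e y \<in> Cs" for y by (simp add: Cs_def e_def)
  have "L (e y) $ x = real k * real (lookup (g y) x)" for y x
    unfolding L_def e_def by (simp add: mult.assoc)
  then have Le: "inner a (L (e y)) = real k * weight (\<lambda>z. a $ z) (g y)" for a y
    unfolding inner_vec_def weight_def by (simp add: sum_distrib_left mult.left_commute)
  have "bv \<in> (\<Union>p\<in>{p. \<forall>x. 0 \<le> p $ x}. \<Union>q\<in>L ` Cs. {p + q})"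
  proof (rule ccontr)
    assume "bv \<notin> (\<Union>p\<in>{p. \<forall>x. 0 \<le> p $ x}. \<Union>q\<in>L ` Cs. {p + q})"
    then obtain a where a0: "\<And>x. 0 \<le> a $ x" and sepC: "\<And>q. q \<in> L ` Cs \<Longrightarrow> inner a bv < inner a q"
      using orthant_sum_separation[OF \<open>compact (L ` Cs)\<close> \<open>convex (L ` Cs)\<close>] by blast
    have sep: "inner a bv < real k * weight (\<lambda>z. a $ z) (g y)" for y
      using sepC[of "L (e y)"] \<open>e y \<in> Cs\<close> Le by simp
    define \<nu> where "\<nu> = Min (range (\<lambda>y. weight (\<lambda>z. a $ z) (g y)))"
    have "\<nu> \<in> range (\<lambda>y. weight (\<lambda>z. a $ z) (g y))" unfolding \<nu>_def by (rule Min_in) auto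
    then obtain y0 where "\<nu> = weight (\<lambda>z. a $ z) (g y0)" by blast
    moreover have "real k * \<nu> \<le> weight (\<lambda>z. a $ z) b"
    proof (rule H)
      show "\<forall>z. 0 \<le> a $ z" using a0 by blast
      show "\<forall>y. \<nu> \<le> weight (\<lambda>z. a $ z) (g y)" unfolding \<nu>_def by simp
    qed
    ultimately show False using sep[of y0] by (simp add: weight_eq_inner bv_def)
  qed
  then obtain p c where p: "\<forall>x. 0 \<le> p $ x" and c: "c \<in> Cs" and bpc: "bv = p + L c" by blast
  have "(\<Sum>y\<in>UNIV. c $ y * real (lookup (g y) x)) \<le> real (lookup b x)" for x
  proof -
    have "real (lookup b x) = p $ x + L c $ x" using arg_cong[OF bpc, of "\<lambda>u. u $ x"] by (simp add: bv_def)
    then show ?thesis using p by (simp add: L_def)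
  qed
  then show ?thesis using c by (intro exI[of _ "\<lambda>y. c $ y"]) (simp add: Cs_def)
qed

definition weight_packing_property :: "('i::finite \<Rightarrow> ('v::finite \<Rightarrow>\<^sub>0 nat)) \<Rightarrow> bool" where
  "weight_packing_property g \<longleftrightarrow> (\<forall>k b.
     (\<forall>w \<nu>. (\<forall>z. 0 \<le> w z) \<longrightarrow> (\<forall>y. \<nu> \<le> weight w (g y)) \<longrightarrow> real k * \<nu> \<le> weight w b)
     \<longrightarrow> packable g k b)"

lemma weight_packing_propertyD:
  assumes "weight_packing_property g"
    and "\<And>w \<nu>. \<forall>z. 0 \<le> w z \<Longrightarrow> \<forall>y. \<nu> \<le> weight w (g y) \<Longrightarrow> real k * \<nu> \<le> weight w b"
  shows "packable g k b"
  using assms unfolding weight_packing_property_def by blast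

lemma int_closure_monomial_ideal_pow:
  fixes g :: "'i::finite \<Rightarrow> ('v::finite \<Rightarrow>\<^sub>0 nat)"
  assumes "weight_packing_property g"
  shows "int_closure (ideal_pow (monomial_ideal g) k :: (('v \<Rightarrow>\<^sub>0 nat) \<Rightarrow>\<^sub>0 'k::idom) set)
    \<subseteq> ideal_pow (monomial_ideal g) k"
proof
  let ?J = "ideal_pow (monomial_ideal g) k :: (('v \<Rightarrow>\<^sub>0 nat) \<Rightarrow>\<^sub>0 'k) set"
  fix r assume "r \<in> int_closure ?J"
  then obtain m a where ai: "\<forall>i\<in>{1..m}. a i \<in> ideal_pow ?J i"
    and eq: "r ^ m + (\<Sum>i=1..m. a i * r ^ (m - i)) = 0"
    unfolding int_closure_def by blast
  have "ideal_pow ?J i \<subseteq> packable_polys g (k * i)" for i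
    by (rule ideal_pow_subset_packable_polys) (simp add: monomial_ideal_pow)
  then have ai_packable: "packable g (k * i) u" if "i \<in> {1..m}" "u \<in> keys (a i)" for i u
    using ai that unfolding packable_polys_def by blast
  have "packable g k b" if "b \<in> keys r" for b
    using assms
  proof (rule weight_packing_propertyD)
    fix w :: "'v \<Rightarrow> real" and \<nu> assume w0: "\<forall>z. 0 \<le> w z" and wg: "\<forall>y. \<nu> \<le> weight w (g y)"
    show "real k * \<nu> \<le> weight w b"
    proof (rule int_closure_weight_ge[OF eq _ that])
      fix i u assume "i \<in> {1..m}" "u \<in> keys (a i)"
      then have "real (k * i) * \<nu> \<le> weight w u"
        using ai_packable by (intro packable_weight_ge) (use w0 wg in auto)
      then show "real i * (real k * \<nu>) \<le> weight w u" by (simp add: algebra_simps)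
    qed
  qed
  then show "r \<in> ?J" by (simp add: monomial_ideal_pow packable_polys_def)
qed

lemma normal_monomial_ideal:
  assumes "weight_packing_property g"
  shows "normal_ideal (monomial_ideal g :: (('v::finite \<Rightarrow>\<^sub>0 nat) \<Rightarrow>\<^sub>0 'k::idom) set)"
  unfolding normal_ideal_def
  using int_closure_monomial_ideal_pow[OF assms] ideal_subset_int_closure[OF is_ideal_ideal_pow]
  by blast

text \<open>Test the weight inequality on b + g y for a generator g y of least weight.\<close>

lemma packable_if_packable_add_gens:
  fixes g :: "'i::finite \<Rightarrow> ('v::finite \<Rightarrow>\<^sub>0 nat)"
  assumes "weight_packing_property g" "\<And>y. packable g (Suc k) (b + g y)"
  shows "packable g k b"
  using assms(1)
proof (rule weight_packing_propertyD)
  fix w :: "'v \<Rightarrow> real" and \<nu> assume w0: "\<forall>z. 0 \<le> w z" and wg: "\<forall>y. \<nu> \<le> weight w (g y)"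
  define \<nu>0 where "\<nu>0 = Min (range (\<lambda>y. weight w (g y)))"
  have "\<nu>0 \<in> range (\<lambda>y. weight w (g y))" unfolding \<nu>0_def by (rule Min_in) auto
  then obtain y0 where y0: "\<nu>0 = weight w (g y0)" by blast
  have "real (Suc k) * \<nu>0 \<le> weight w (b + g y0)"
    using assms(2) by (rule packable_weight_ge) (use w0 in \<open>auto simp: \<nu>0_def\<close>)
  then have "real k * \<nu>0 \<le> weight w b" by (simp add: y0 weight_add algebra_simps)
  moreover have "real k * \<nu> \<le> real k * \<nu>0" using wg y0 by (simp add: mult_left_mono)
  ultimately show "real k * \<nu> \<le> weight w b" by linarith
qed

lemma lookup_mult_single_add:
  fixes f :: "('v \<Rightarrow>\<^sub>0 nat) \<Rightarrow>\<^sub>0 'k::comm_ring_1"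
  shows "lookup (f * Poly_Mapping.single s 1) (b + s) = lookup f b"
proof -
  have "lookup (f * Poly_Mapping.single s 1) (b + s) = lookup f b * lookup (Poly_Mapping.single s 1) s"
    by (rule lookup_mult_unique_pair) (auto split: if_splits)
  then show ?thesis by simp
qed

lemma strong_persistence_monomial_ideal:
  assumes "weight_packing_property g"
  shows "strong_persistence (monomial_ideal g :: (('v::finite \<Rightarrow>\<^sub>0 nat) \<Rightarrow>\<^sub>0 'k::comm_ring_1) set)"
  unfolding strong_persistence_def
proof (intro allI impI equalityI subsetI)
  fix k :: nat and f
  let ?I = "monomial_ideal g :: (('v \<Rightarrow>\<^sub>0 nat) \<Rightarrow>\<^sub>0 'k) set"
  assume "f \<in> colon (ideal_pow ?I (k + 1)) ?I"
  moreover have "Poly_Mapping.single (g y) 1 \<in> ?I" for y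
    unfolding monomial_ideal_def by (rule ideal_gen_base) simp
  ultimately have "f * Poly_Mapping.single (g y) 1 \<in> packable_polys g (Suc k)" for y
    unfolding colon_def by (simp del: ideal_pow.simps add: monomial_ideal_pow)
  then have "packable g (Suc k) (b + g y)" if "b \<in> keys f" for b y
  proof -
    have "b + g y \<in> keys (f * Poly_Mapping.single (g y) 1)"
      using that lookup_mult_single_add[of f "g y" b] by (simp add: in_keys_iff)
    then show ?thesis using \<open>f * Poly_Mapping.single (g y) 1 \<in> packable_polys g (Suc k)\<close>
      by (simp add: packable_polys_def)
  qed
  then show "f \<in> ideal_pow ?I k"
    using packable_if_packable_add_gens[OF assms]
    by (simp add: monomial_ideal_pow packable_polys_def)
next
  fix k :: nat and f assume "f \<in> ideal_pow (monomial_ideal g) k"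
  then show "f \<in> colon (ideal_pow (monomial_ideal g) (k + 1)) (monomial_ideal g)"
    using ideal_pow_Suc_memI[of f _ k] by (simp add: colon_def del: ideal_pow.simps)
qed

definition nbhd_exps :: "('v::finite \<Rightarrow> 'v \<Rightarrow> bool) \<Rightarrow> 'v \<Rightarrow> ('v \<Rightarrow>\<^sub>0 nat)" where
  "nbhd_exps E y = (\<Sum>z\<in>closed_nbhd E y. Poly_Mapping.single z 1)"

lemma prod_Var:
  "finite A \<Longrightarrow> (\<Prod>z\<in>A. Var z) = (Poly_Mapping.single (\<Sum>z\<in>A. Poly_Mapping.single z 1) 1 :: ('v \<Rightarrow>\<^sub>0 nat) \<Rightarrow>\<^sub>0 'k::comm_ring_1)"
  by (induction A rule: finite_induct) (simp_all add: Var_def mult_single)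

lemma NI_eq_monomial_ideal: "NI E = monomial_ideal (nbhd_exps E)"
  unfolding NI_def monomial_ideal_def nbhd_exps_def by (simp add: prod_Var)

lemma persistence_NI_if_strong_persistence:
  "strong_persistence (NI E :: (('v::finite \<Rightarrow>\<^sub>0 nat) \<Rightarrow>\<^sub>0 'k::comm_ring_1) set)
    \<Longrightarrow> persistence (NI E :: (('v \<Rightarrow>\<^sub>0 nat) \<Rightarrow>\<^sub>0 'k) set)"
  unfolding NI_def by (erule strong_persistence_imp_persistence)

lemma lookup_nbhd_exps: "lookup (nbhd_exps E y) x = of_bool (x \<in> closed_nbhd E y)"
  unfolding nbhd_exps_def lookup_sum by (simp add: lookup_single when_def)

lemma sum_nbhd_exps:
  fixes h :: "'v::finite \<Rightarrow> 'a::semiring_1"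
  assumes sym: "\<And>a b. E a b \<longleftrightarrow> E b a"
  shows "(\<Sum>y\<in>UNIV. h y * of_nat (lookup (nbhd_exps E y) x)) = (\<Sum>y\<in>closed_nbhd E x. h y)"
proof -
  have "{y. x \<in> closed_nbhd E y} = closed_nbhd E x"
    using sym unfolding closed_nbhd_def by blast
  then show ?thesis by (simp add: lookup_nbhd_exps Int_def)
qed

section \<open>The cycle\<close>

lemma floor_diff_le: "x - y \<le> of_int m \<Longrightarrow> \<lfloor>x\<rfloor> - \<lfloor>y\<rfloor> \<le> m"
  using floor_mono[of x "y + of_int m"] by simp

lemma cyclic_neighbour_cases:
  fixes n j :: nat
  assumes "n \<ge> 3" "j < n"
  obtains "j = 0" "(j + n - 1) mod n = n - 1" "(j + 1) mod n = 1"
    | "j = n - 1" "(j + n - 1) mod n = n - 2" "(j + 1) mod n = 0"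
    | "0 < j" "j < n - 1" "(j + n - 1) mod n = j - 1" "(j + 1) mod n = j + 1"
proof -
  consider "j = 0" | "j = n - 1" | "0 < j \<and> j < n - 1" using assms by linarith
  then show ?thesis
  proof cases
    case 1 then show ?thesis using that(1) assms by simp
  next
    case 2
    have "(j + n - 1) mod n = n - 2"
      using 2 assms(1) mod_add_self2[of "n - 2" n] by (simp add: numeral_2_eq_2)
    then show ?thesis using that(2) 2 assms(1) by simp
  next
    case 3
    have "(j + n - 1) mod n = j - 1"
      using 3 assms(2) mod_add_self2[of "j - 1" n] by simp
    moreover have "(j + 1) mod n = j + 1" using 3 by (intro mod_less) linarith
    ultimately show ?thesis using that(3) 3 by simp
  qed
qed

text \<open>Rounding the partial sums S of a fractional packing of the cycle: the rounded
  increments on any three cyclically consecutive vertices add up to the floor of a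
  difference of partial sums, possibly wrapping around through S n = k.\<close>

lemma cyclic_window_floor_le:
  fixes S :: "nat \<Rightarrow> real"
  assumes "n \<ge> 3" "S 0 = 0" "S n = real k" "j < n"
    and "S (Suc ((j + n - 1) mod n)) - S ((j + n - 1) mod n) + (S (Suc j) - S j)
         + (S (Suc ((j + 1) mod n)) - S ((j + 1) mod n)) \<le> of_int B"
  shows "\<lfloor>S (Suc ((j + n - 1) mod n))\<rfloor> - \<lfloor>S ((j + n - 1) mod n)\<rfloor> + (\<lfloor>S (Suc j)\<rfloor> - \<lfloor>S j\<rfloor>)
         + (\<lfloor>S (Suc ((j + 1) mod n))\<rfloor> - \<lfloor>S ((j + 1) mod n)\<rfloor>) \<le> B"
  using assms(1,4)
proof (cases rule: cyclic_neighbour_cases)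
  case 1
  moreover have "Suc (n - 1) = n" using assms(1) by simp
  moreover have "S 2 - S (n - 1) \<le> of_int (B - int k)"
    using assms(2,3,5) calculation by (simp add: numeral_2_eq_2)
  then have "\<lfloor>S 2\<rfloor> - \<lfloor>S (n - 1)\<rfloor> \<le> B - int k" by (rule floor_diff_le)
  ultimately show ?thesis using assms(2,3) by (simp add: numeral_2_eq_2)
next
  case 2
  moreover have "Suc j = n" "Suc (n - 2) = n - 1" using 2 assms(1) by simp_all
  moreover have "S 1 - S (n - 2) \<le> of_int (B - int k)"
    using assms(2,3,5) calculation by simp
  then have "\<lfloor>S 1\<rfloor> - \<lfloor>S (n - 2)\<rfloor> \<le> B - int k" by (rule floor_diff_le)
  ultimately show ?thesis using assms(2,3) by simp
next
  case 3
  moreover have "S (j + 2) - S (j - 1) \<le> of_int B"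
    using assms(5) calculation by simp
  then have "\<lfloor>S (j + 2)\<rfloor> - \<lfloor>S (j - 1)\<rfloor> \<le> B" by (rule floor_diff_le)
  ultimately show ?thesis by simp
qed

context
  fixes n :: nat and v :: "nat \<Rightarrow> 'v::finite"
  assumes n3: "n \<ge> 3" and bij: "bij_betw v {0..<n} (UNIV :: 'v set)"
begin

lemma cycle_vertex_eq_iff: "i < n \<Longrightarrow> j < n \<Longrightarrow> v i = v j \<longleftrightarrow> i = j"
  using bij unfolding bij_betw_def inj_on_def by auto

lemma cycle_vertex_cases: obtains j where "j < n" "x = v j"
  using bij unfolding bij_betw_def by (metis UNIV_I atLeastLessThan_iff imageE)

lemma closed_nbhd_cycle:
  assumes j: "j < n"
  shows "closed_nbhd (cycle_edge n v) (v j) = {v ((j + n - 1) mod n), v j, v ((j + 1) mod n)}"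
proof (rule set_eqI)
  fix z
  have "((j + n - 1) mod n + 1) mod n = (j + n - 1 + 1) mod n" by (rule mod_add_left_eq)
  also have "j + n - 1 + 1 = j + n" using n3 by simp
  finally have pred_j: "((j + n - 1) mod n + 1) mod n = j" using j by simp
  have bounds: "(j + n - 1) mod n < n" "(i + 1) mod n < n" for i using n3 by auto
  have e1: "cycle_edge n v (v j) (v ((j + 1) mod n))" unfolding cycle_edge_def using j by blast
  have e2: "cycle_edge n v (v j) (v ((j + n - 1) mod n))"
    unfolding cycle_edge_def using bounds(1) pred_j by (intro exI[of _ "(j + n - 1) mod n"]) simp
  show "z \<in> closed_nbhd (cycle_edge n v) (v j) \<longleftrightarrow> z \<in> {v ((j + n - 1) mod n), v j, v ((j + 1) mod n)}"
  proof
    assume "z \<in> closed_nbhd (cycle_edge n v) (v j)"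
    then consider "z = v j" | i where "i < n" "v j = v i" "z = v ((i + 1) mod n)"
      | i where "i < n" "z = v i" "v j = v ((i + 1) mod n)"
      unfolding closed_nbhd_def cycle_edge_def by blast
    then show "z \<in> {v ((j + n - 1) mod n), v j, v ((j + 1) mod n)}"
    proof cases
      case (2 i)
      then show ?thesis using cycle_vertex_eq_iff j by simp
    next
      case (3 i)
      have "(i + 1) mod n = j" by (rule iffD1[OF cycle_vertex_eq_iff[OF bounds(2) j] 3(3)[symmetric]])
      then have "i = (j + n - 1) mod n" using \<open>i < n\<close> n3 by (cases "i = n - 1") auto
      then show ?thesis using 3 by simp
    qed simp
  next
    assume "z \<in> {v ((j + n - 1) mod n), v j, v ((j + 1) mod n)}"
    then show "z \<in> closed_nbhd (cycle_edge n v) (v j)" using e1 e2 unfolding closed_nbhd_def by auto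
  qed
qed

lemma sum_closed_nbhd_cycle:
  assumes j: "j < n"
  shows "(\<Sum>y\<in>closed_nbhd (cycle_edge n v) (v j). h y) = h (v ((j + n - 1) mod n)) + h (v j) + h (v ((j + 1) mod n))"
proof -
  have "(j + n - 1) mod n \<noteq> j \<and> (j + 1) mod n \<noteq> j \<and> (j + n - 1) mod n \<noteq> (j + 1) mod n"
    using n3 j by (cases rule: cyclic_neighbour_cases) (use n3 in auto)
  moreover have "(j + n - 1) mod n < n" "(j + 1) mod n < n" using n3 by auto
  ultimately show ?thesis
    using j by (simp add: closed_nbhd_cycle cycle_vertex_eq_iff add.assoc)
qed

text \<open>A fractional packing c of the closed neighbourhoods of the cycle is rounded to an
  integral one by taking the increments of the floors of its partial sums along the cycle.\<close>

lemma packable_cycle_if_fractional: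
  fixes c :: "'v \<Rightarrow> real" and b :: "'v \<Rightarrow>\<^sub>0 nat"
  assumes c0: "\<And>y. 0 \<le> c y" and cs: "sum c UNIV = real k"
    and cb: "\<And>x. (\<Sum>y\<in>UNIV. c y * real (lookup (nbhd_exps (cycle_edge n v) y) x)) \<le> real (lookup b x)"
  shows "packable (nbhd_exps (cycle_edge n v)) k b"
proof -
  define S where "S t = (\<Sum>i<t. c (v i))" for t
  define D where "D i = nat (\<lfloor>S (Suc i)\<rfloor> - \<lfloor>S i\<rfloor>)" for i
  have D: "int (D i) = \<lfloor>S (Suc i)\<rfloor> - \<lfloor>S i\<rfloor>" for i
    using floor_mono[of "S i" "S (Suc i)"] c0[of "v i"] by (simp add: D_def S_def)
  have S0: "S 0 = 0" by (simp add: S_def)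
  have Sn: "S n = real k"
    using cs sum.reindex_bij_betw[OF bij, of c] by (simp add: S_def lessThan_atLeast0)
  define d where "d y = D (the_inv_into {0..<n} v y)" for y
  have dv: "d (v i) = D i" if "i < n" for i
    using that bij by (simp add: d_def bij_betw_def the_inv_into_f_f)
  have "sum d UNIV = (\<Sum>i\<in>{0..<n}. d (v i))"
    using sum.reindex_bij_betw[OF bij, of d] by simp
  also have "\<dots> = (\<Sum>i<n. D i)"
    unfolding lessThan_atLeast0 by (rule sum.cong) (simp_all add: dv)
  finally have "sum d UNIV = (\<Sum>i<n. D i)" .
  then have "int (sum d UNIV) = (\<Sum>i<n. int (D i))" by simp
  also have "\<dots> = int k"
    using sum_lessThan_telescope[of "\<lambda>i. \<lfloor>S i\<rfloor>" n] by (simp add: D S0 Sn)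
  finally have "sum d UNIV = k" by (simp only: of_nat_eq_iff)
  moreover have "(\<Sum>y\<in>UNIV. d y * lookup (nbhd_exps (cycle_edge n v) y) x) \<le> lookup b x" for x
  proof -
    obtain j where j: "j < n" and x: "x = v j" by (rule cycle_vertex_cases)
    let ?p = "(j + n - 1) mod n" and ?q = "(j + 1) mod n"
    have "?p < n" "?q < n" using n3 by auto
    have sym: "\<And>a b. cycle_edge n v a b \<longleftrightarrow> cycle_edge n v b a"
      unfolding cycle_edge_def by blast
    have "S (Suc ?p) - S ?p + (S (Suc j) - S j) + (S (Suc ?q) - S ?q) \<le> of_int (lookup b x)"
      using cb[of x] unfolding sum_nbhd_exps[OF sym] x sum_closed_nbhd_cycle[OF j]
      by (simp add: S_def)
    then have "int (D ?p + D j + D ?q) \<le> int (lookup b x)"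
      using cyclic_window_floor_le[OF n3 S0 Sn j] by (simp add: D)
    moreover have "(\<Sum>y\<in>UNIV. d y * lookup (nbhd_exps (cycle_edge n v) y) x) = D ?p + D j + D ?q"
      using sum_nbhd_exps[OF sym, where h = d] \<open>?p < n\<close> \<open>?q < n\<close> j
      by (simp add: x sum_closed_nbhd_cycle dv)
    ultimately show ?thesis by simp
  qed
  ultimately show ?thesis unfolding packable_def by blast
qed

lemma cycle_weight_packing_property: "weight_packing_property (nbhd_exps (cycle_edge n v))"
  unfolding weight_packing_property_def
proof (intro allI impI)
  fix k b
  assume "\<forall>w \<nu>. (\<forall>z. 0 \<le> w z) \<longrightarrow> (\<forall>y. \<nu> \<le> weight w (nbhd_exps (cycle_edge n v) y)) \<longrightarrow> real k * \<nu> \<le> weight w b"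
  then obtain c where "\<forall>y. 0 \<le> c y" "sum c UNIV = real k"
    "\<forall>x. (\<Sum>y\<in>UNIV. c y * real (lookup (nbhd_exps (cycle_edge n v) y) x)) \<le> real (lookup b x)"
    using fractional_packing_exists[of "nbhd_exps (cycle_edge n v)" k b] by blast
  then show "packable (nbhd_exps (cycle_edge n v)) k b"
    by (intro packable_cycle_if_fractional) auto
qed

end

theorem theorem3p2:
  fixes n :: nat and v :: "nat \<Rightarrow> 'v::finite"
  assumes "n \<ge> 3" and "bij_betw v {0..<n} (UNIV :: 'v set)"
  shows "normal_ideal (NI (cycle_edge n v) :: (('v \<Rightarrow>\<^sub>0 nat) \<Rightarrow>\<^sub>0 'k::field) set)
       \<and> strong_persistence (NI (cycle_edge n v) :: (('v \<Rightarrow>\<^sub>0 nat) \<Rightarrow>\<^sub>0 'k::field) set)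
       \<and> persistence (NI (cycle_edge n v) :: (('v \<Rightarrow>\<^sub>0 nat) \<Rightarrow>\<^sub>0 'k::field) set)"
proof -
  have packing: "weight_packing_property (nbhd_exps (cycle_edge n v))"
    using assms by (rule cycle_weight_packing_property)
  have strong: "strong_persistence (NI (cycle_edge n v) :: (('v \<Rightarrow>\<^sub>0 nat) \<Rightarrow>\<^sub>0 'k) set)"
    unfolding NI_eq_monomial_ideal using packing by (rule strong_persistence_monomial_ideal)
  moreover have "normal_ideal (NI (cycle_edge n v) :: (('v \<Rightarrow>\<^sub>0 nat) \<Rightarrow>\<^sub>0 'k) set)"
    unfolding NI_eq_monomial_ideal using packing by (rule normal_monomial_ideal)
  moreover have "persistence (NI (cycle_edge n v) :: (('v \<Rightarrow>\<^sub>0 nat) \<Rightarrow>\<^sub>0 'k) set)"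
    using strong by (rule persistence_NI_if_strong_persistence)
  ultimately show ?thesis by blast
qed

end
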